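(* Let $Q$ be a complete quiver with exactly two frozen vertices, and let $j$ be a mutable vertex which is cycle-preserving for $Q$ and is not the apex of a vortex in $Q$. Then $\mu_j(Q)$ is a brog quiver.
   Context: A quiver is a finite directed multigraph with no loops and no oriented 2-cycles, whose vertex set is partitioned into mutable and frozen vertices; arrows between two frozen vertices are ignored. $b_{ik}$ = number of arrows $i\to k$ minus number of arrows $k\to i$; $Q|_S$ is the induced subquiver on $S$. Mutation $\mu_j$ at mutable $j$: for each path $i\to j\to k$ add $b_{ij}b_{jk}$ arrows $i\to k$, reverse all arrows at $j$, cancel 2-cycles. Complete: at least one arrow between every pair of vertices at least one of which is mutable. A 3-vertex (sub)quiver is an oriented 3-cycle if it has at most one frozen vertex and its underlying directed graph is not acyclic. A mutable vertex $j$ is cycle-preserving for $Q$ if whenever $Q|_{\{i,j,k\}}$ is an oriented 3-cycle containing $j$, so is $\mu_j(Q)|_{\{i,j,k\}}$. A vortex is a quiver on four vertices, at least three mutable, in which one vertex (the apex) is a source or sink and the other three support an oriented cycle; $j$ is the apex of a vortex in $Q$ if it is the apex of some 4-vertex induced subquiver that is a vortex. A mutable vertex adjacent to at least one frozen vertex is red (resp. green) if all arrows between it and frozen vertices point towards (resp. away from) it. Two mutable vertices $i,j$ are complementary if for every frozen vertex $u$ with $b_{iu}\ne0$ and $b_{ju}\ne0$, $b_{iu}$ and $b_{ju}$ have opposite signs. A quiver is brog if its mutable vertices can be coloured blue, red, orange and green such that: (1) the vertices coloured red are exactly the red vertices; (2) the vertices coloured green are exactly the green vertices; (3) each blue vertex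 $i$ has $b_{ij}\ge0$ for every red $j$ and $b_{ij}\le0$ for every green $j$; (4) each orange vertex $i$ has $b_{ij}\ge0$ for every green $j$ and $b_{ij}\le0$ for every red $j$; (5) every blue vertex and every orange vertex are complementary. *)

theory Defs
  imports Main
begin

text \<open>A quiver without loops and oriented 2-cycles is encoded by its vertex set, its set of
frozen vertices and the skew-symmetric integer matrix b, where b i k = (#arrows i to k) -
(#arrows k to i). Arrows between two frozen vertices are ignored, i.e. b vanishes there.\<close>

record 'v quiver =
  verts  :: "'v set"
  frozen :: "'v set"
  bm     :: "'v \<Rightarrow> 'v \<Rightarrow> int"

definition mutable :: "'v quiver \<Rightarrow> 'v set" where
  "mutable Q = verts Q - frozen Q"

definition wf_quiver :: "'v quiver \<Rightarrow> bool" where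
  "wf_quiver Q \<longleftrightarrow> finite (verts Q) \<and> frozen Q \<subseteq> verts Q
    \<and> (\<forall>x y. bm Q x y = - bm Q y x)
    \<and> (\<forall>x y. x \<notin> verts Q \<longrightarrow> bm Q x y = 0)
    \<and> (\<forall>x y. x \<in> frozen Q \<longrightarrow> y \<in> frozen Q \<longrightarrow> bm Q x y = 0)"

definition mutate :: "'v \<Rightarrow> 'v quiver \<Rightarrow> 'v quiver" where
  "mutate j Q = Q\<lparr> bm := (\<lambda>i k.
      if i \<in> frozen Q \<and> k \<in> frozen Q then 0
      else if i = j \<or> k = j then - bm Q i k
      else bm Q i k + max (bm Q i j) 0 * max (bm Q j k) 0
                    - max (- bm Q i j) 0 * max (- bm Q j k) 0) \<rparr>"

definition complete :: "'v quiver \<Rightarrow> bool" where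
  "complete Q \<longleftrightarrow> (\<forall>x\<in>verts Q. \<forall>y\<in>verts Q. x \<noteq> y \<longrightarrow>
      (x \<notin> frozen Q \<or> y \<notin> frozen Q) \<longrightarrow> bm Q x y \<noteq> 0)"

definition arrows_on :: "'v quiver \<Rightarrow> 'v set \<Rightarrow> ('v \<times> 'v) set" where
  "arrows_on Q S = {(x, y). x \<in> S \<and> y \<in> S \<and> \<not> (x \<in> frozen Q \<and> y \<in> frozen Q)
                          \<and> bm Q x y > 0}"

definition oriented_3cycle :: "'v quiver \<Rightarrow> 'v set \<Rightarrow> bool" where
  "oriented_3cycle Q S \<longleftrightarrow> S \<subseteq> verts Q \<and> card S = 3 \<and> card (S \<inter> frozen Q) \<le> 1
     \<and> \<not> acyclic (arrows_on Q S)"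

definition cycle_preserving :: "'v quiver \<Rightarrow> 'v \<Rightarrow> bool" where
  "cycle_preserving Q j \<longleftrightarrow> j \<in> mutable Q \<and>
     (\<forall>i k. oriented_3cycle Q {i, j, k} \<longrightarrow> oriented_3cycle (mutate j Q) {i, j, k})"

definition vortex_with_apex :: "'v quiver \<Rightarrow> 'v set \<Rightarrow> 'v \<Rightarrow> bool" where
  "vortex_with_apex Q S a \<longleftrightarrow> S \<subseteq> verts Q \<and> card S = 4 \<and> card (S \<inter> frozen Q) \<le> 1
     \<and> a \<in> S
     \<and> ((\<forall>x\<in>S. (x, a) \<notin> arrows_on Q S) \<or> (\<forall>x\<in>S. (a, x) \<notin> arrows_on Q S))
     \<and> \<not> acyclic (arrows_on Q (S - {a}))"

definition is_vortex_apex :: "'v quiver \<Rightarrow> 'v \<Rightarrow> bool" where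
  "is_vortex_apex Q j \<longleftrightarrow> (\<exists>S. vortex_with_apex Q S j)"

definition red_vertex :: "'v quiver \<Rightarrow> 'v \<Rightarrow> bool" where
  "red_vertex Q i \<longleftrightarrow> i \<in> mutable Q \<and> (\<exists>u\<in>frozen Q. bm Q i u \<noteq> 0)
     \<and> (\<forall>u\<in>frozen Q. bm Q u i \<ge> 0)"

definition green_vertex :: "'v quiver \<Rightarrow> 'v \<Rightarrow> bool" where
  "green_vertex Q i \<longleftrightarrow> i \<in> mutable Q \<and> (\<exists>u\<in>frozen Q. bm Q i u \<noteq> 0)
     \<and> (\<forall>u\<in>frozen Q. bm Q i u \<ge> 0)"

definition complementary :: "'v quiver \<Rightarrow> 'v \<Rightarrow> 'v \<Rightarrow> bool" where
  "complementary Q i j \<longleftrightarrow> (\<forall>u\<in>frozen Q. bm Q i u \<noteq> 0 \<longrightarrow> bm Q j u \<noteq> 0 \<longrightarrow>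
      sgn (bm Q i u) \<noteq> sgn (bm Q j u))"

datatype colour = Blue | Red | Orange | Green

definition brog :: "'v quiver \<Rightarrow> bool" where
  "brog Q \<longleftrightarrow> (\<exists>c :: 'v \<Rightarrow> colour.
      (\<forall>i\<in>mutable Q. c i = Red \<longleftrightarrow> red_vertex Q i)
    \<and> (\<forall>i\<in>mutable Q. c i = Green \<longleftrightarrow> green_vertex Q i)
    \<and> (\<forall>i\<in>mutable Q. \<forall>j\<in>mutable Q. c i = Blue \<longrightarrow>
          (c j = Red \<longrightarrow> bm Q i j \<ge> 0) \<and> (c j = Green \<longrightarrow> bm Q i j \<le> 0))
    \<and> (\<forall>i\<in>mutable Q. \<forall>j\<in>mutable Q. c i = Orange \<longrightarrow>
          (c j = Green \<longrightarrow> bm Q i j \<ge> 0) \<and> (c j = Red \<longrightarrow> bm Q i j \<le> 0))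
    \<and> (\<forall>i\<in>mutable Q. \<forall>j\<in>mutable Q. c i = Blue \<longrightarrow> c j = Orange \<longrightarrow> complementary Q i j))"

end

theory Submission
  imports Defs
begin

text \<open>Write Q' for the mutation of Q at j. Completeness and cycle preservation of Q make Q'
complete and force every path x \<rightarrow> j \<rightarrow> y of Q' to close into an oriented 3-cycle. By
completeness, closing paths propagate along arrows, so j is a source or a sink of any oriented
3-cycle of Q' avoiding j; mutation at j leaves the arrows of that cycle untouched and makes j a
sink or source of it in Q, that is, the apex of a vortex. Hence every oriented 3-cycle of Q'
passes through j. Colour the red and green vertices of Q' accordingly, j orange if it is
neither, and all other vertices blue. A vertex that is neither red nor green lies on a path
u \<rightarrow> i \<rightarrow> v between the two frozen vertices, and each brog condition then follows either
from a path through j closing up or from the absence of oriented 3-cycles avoiding j.\<close>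

abbreviation arrow :: "'v quiver \<Rightarrow> 'v \<Rightarrow> 'v \<Rightarrow> bool" where
  "arrow Q x y \<equiv> 0 < bm Q x y"

lemma not_acyclic_if_3cycle:
  "(x, y) \<in> r \<Longrightarrow> (y, z) \<in> r \<Longrightarrow> (z, x) \<in> r \<Longrightarrow> \<not> acyclic r"
  unfolding acyclic_def by (meson trancl.r_into_trancl trancl_trans)

lemma wf_quiver_skew: "wf_quiver Q \<Longrightarrow> bm Q x y = - bm Q y x"
  unfolding wf_quiver_def by blast

lemma frozen_subset_verts: "wf_quiver Q \<Longrightarrow> frozen Q \<subseteq> verts Q"
  unfolding wf_quiver_def by blast

lemma arrow_asym: "wf_quiver Q \<Longrightarrow> arrow Q x y \<Longrightarrow> \<not> arrow Q y x"
  using wf_quiver_skew[of Q x y] by simp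

lemma arrow_irrefl: "wf_quiver Q \<Longrightarrow> \<not> arrow Q x x"
  by (metis arrow_asym)

lemma arrow_imp_verts: "wf_quiver Q \<Longrightarrow> arrow Q x y \<Longrightarrow> x \<in> verts Q \<and> y \<in> verts Q"
  unfolding wf_quiver_def by (metis less_irrefl neg_0_equal_iff_equal)

lemma arrow_imp_not_both_frozen:
  "wf_quiver Q \<Longrightarrow> arrow Q x y \<Longrightarrow> \<not> (x \<in> frozen Q \<and> y \<in> frozen Q)"
  unfolding wf_quiver_def by (metis less_irrefl)

lemma arrow_or_converse:
  assumes "wf_quiver Q" "complete Q" "x \<in> verts Q" "y \<in> verts Q" "x \<noteq> y"
    "\<not> (x \<in> frozen Q \<and> y \<in> frozen Q)"
  shows "arrow Q x y \<or> arrow Q y x"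
proof -
  have "bm Q x y \<noteq> 0" using assms unfolding complete_def by blast
  then show ?thesis using wf_quiver_skew[OF assms(1), of y x] by linarith
qed

lemma acyclic_arrows_on_triple:
  assumes "wf_quiver Q" "\<not> arrow Q a b" "\<not> arrow Q b c" "\<not> arrow Q a c"
  shows "acyclic (arrows_on Q {a, b, c})"
proof (rule acyclicI_order[where f = "\<lambda>z. if z = a then 0 else if z = b then 1 else 2 :: nat"])
  fix p q assume "(p, q) \<in> arrows_on Q {a, b, c}"
  then have "p \<in> {a, b, c}" "q \<in> {a, b, c}" "arrow Q p q"
    unfolding arrows_on_def by auto
  then show "(if q = a then 0 else if q = b then 1 else 2 :: nat)
      < (if p = a then 0 else if p = b then 1 else 2)"
    using assms arrow_irrefl[OF assms(1), of p] by auto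
qed

lemma arrow_from_frozen_if_red:
  assumes wf: "wf_quiver Q" and complete: "complete Q"
    and red: "red_vertex Q i" and w: "w \<in> frozen Q"
  shows "arrow Q w i"
proof -
  have "i \<in> verts Q" "i \<notin> frozen Q" "w \<in> verts Q"
    using red w frozen_subset_verts[OF wf] unfolding red_vertex_def mutable_def by auto
  then have "arrow Q w i \<or> arrow Q i w"
    using arrow_or_converse[OF wf complete] w by metis
  moreover have "0 \<le> bm Q w i" using red w unfolding red_vertex_def by blast
  ultimately show ?thesis using wf_quiver_skew[OF wf, of i w] by linarith
qed

lemma arrow_to_frozen_if_green:
  assumes wf: "wf_quiver Q" and complete: "complete Q"
    and green: "green_vertex Q i" and w: "w \<in> frozen Q"
  shows "arrow Q i w"
proof -
  have "i \<in> verts Q" "i \<notin> frozen Q" "w \<in> verts Q"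
    using green w frozen_subset_verts[OF wf] unfolding green_vertex_def mutable_def by auto
  then have "arrow Q w i \<or> arrow Q i w"
    using arrow_or_converse[OF wf complete] w by metis
  moreover have "0 \<le> bm Q i w" using green w unfolding green_vertex_def by blast
  ultimately show ?thesis using wf_quiver_skew[OF wf, of i w] by linarith
qed

lemma mixed_vertex_between_frozen:
  assumes wf: "wf_quiver Q" and complete: "complete Q" and two: "card (frozen Q) = 2"
    and i: "i \<in> mutable Q" "\<not> red_vertex Q i" "\<not> green_vertex Q i"
  shows "\<exists>w w'. frozen Q = {w, w'} \<and> arrow Q w i \<and> arrow Q i w'"
proof -
  obtain u v where frozen: "frozen Q = {u, v}"
    using two unfolding card_2_iff by blast
  have "i \<in> verts Q" "i \<notin> frozen Q" "u \<in> verts Q" "v \<in> verts Q"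
    using i frozen frozen_subset_verts[OF wf] unfolding mutable_def by auto
  then have "arrow Q u i \<or> arrow Q i u" "arrow Q v i \<or> arrow Q i v"
    using arrow_or_converse[OF wf complete] frozen by (metis insertCI)+
  moreover have "\<not> (arrow Q u i \<and> arrow Q v i)"
  proof
    assume "arrow Q u i \<and> arrow Q v i"
    then have "red_vertex Q i"
      unfolding red_vertex_def using i(1) frozen wf_quiver_skew[OF wf, of i u] by auto
    with i(2) show False ..
  qed
  moreover have "\<not> (arrow Q i u \<and> arrow Q i v)"
  proof
    assume "arrow Q i u \<and> arrow Q i v"
    then have "green_vertex Q i"
      unfolding green_vertex_def using i(1) frozen by auto
    with i(3) show False ..
  qed
  ultimately consider "arrow Q u i" "arrow Q i v" | "arrow Q v i" "arrow Q i u"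
    by blast
  then show ?thesis
  proof cases
    case 1
    then show ?thesis using frozen by (intro exI[of _ u] exI[of _ v]) simp
  next
    case 2
    then show ?thesis using frozen by (intro exI[of _ v] exI[of _ u]) (simp add: insert_commute)
  qed
qed

lemma mutate_simps [simp]:
  "verts (mutate j Q) = verts Q" "frozen (mutate j Q) = frozen Q" "mutable (mutate j Q) = mutable Q"
  by (simp_all add: mutate_def mutable_def)

lemma bm_mutate_apex:
  assumes "j \<notin> frozen Q"
  shows "bm (mutate j Q) j x = - bm Q j x" and "bm (mutate j Q) x j = - bm Q x j"
  using assms by (simp_all add: mutate_def)

lemma bm_mutate_path:
  assumes "\<not> (x \<in> frozen Q \<and> y \<in> frozen Q)" "x \<noteq> j" "y \<noteq> j" "arrow Q x j" "arrow Q j y"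
  shows "bm (mutate j Q) x y = bm Q x y + bm Q x j * bm Q j y"
  using assms by (auto simp: mutate_def)

lemma bm_mutate_off_paths:
  assumes "\<not> (x \<in> frozen Q \<and> y \<in> frozen Q)" "x \<noteq> j" "y \<noteq> j" "bm Q x j * bm Q j y \<le> 0"
  shows "bm (mutate j Q) x y = bm Q x y"
  using assms by (auto simp: mutate_def max_def zero_le_mult_iff mult_le_0_iff)

lemma wf_quiver_mutate:
  assumes "wf_quiver Q"
  shows "wf_quiver (mutate j Q)"
proof -
  have "bm (mutate j Q) x y = - bm (mutate j Q) y x" for x y
  proof -
    have "bm Q y x = - bm Q x y" "bm Q y j = - bm Q j y" "bm Q j x = - bm Q x j"
      using wf_quiver_skew[OF assms] by blast+
    then show ?thesis
      unfolding mutate_def by (simp add: mult.commute)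
  qed
  moreover have "bm (mutate j Q) x y = 0" if "x \<notin> verts Q" for x y
  proof -
    have out: "bm Q x z = 0" for z
      using assms that unfolding wf_quiver_def by blast
    moreover have "bm Q z x = 0" for z
      using out wf_quiver_skew[OF assms, of z x] by simp
    ultimately show ?thesis
      unfolding mutate_def by simp
  qed
  moreover have "bm (mutate j Q) x y = 0" if "x \<in> frozen Q" "y \<in> frozen Q" for x y
    using that by (simp add: mutate_def)
  moreover have "finite (verts Q)" "frozen Q \<subseteq> verts Q"
    using assms unfolding wf_quiver_def by blast+
  ultimately show ?thesis
    unfolding wf_quiver_def mutate_simps by blast
qed

lemma arrow_mutate_of_path:
  assumes wf: "wf_quiver Q" and complete: "complete Q" and preserving: "cycle_preserving Q j"
    and not_frozen: "\<not> (x \<in> frozen Q \<and> y \<in> frozen Q)"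
    and xj: "arrow Q x j" and jy: "arrow Q j y"
  shows "arrow (mutate j Q) x y"
proof (cases "arrow Q x y")
  case True
  have "x \<noteq> j" "y \<noteq> j" using xj jy arrow_irrefl[OF wf] by blast+
  then show ?thesis
    using bm_mutate_path[OF not_frozen _ _ xj jy] True mult_pos_pos[OF xj jy] by simp
next
  case False
  txt \<open>Then x, j, y form an oriented 3-cycle; since the arrows at j get reversed, it can only
    survive the mutation if x \<rightarrow> y afterwards.\<close>
  have j: "j \<in> verts Q" "j \<notin> frozen Q"
    using preserving unfolding cycle_preserving_def mutable_def by auto
  have distinct: "x \<noteq> j" "y \<noteq> j" "x \<noteq> y"
    using xj jy arrow_irrefl[OF wf] arrow_asym[OF wf] by metis+
  have xy: "x \<in> verts Q" "y \<in> verts Q"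
    using arrow_imp_verts[OF wf] xj jy by blast+
  with False have "arrow Q y x"
    using arrow_or_converse[OF wf complete xy distinct(3) not_frozen] by blast
  then have "\<not> acyclic (arrows_on Q {x, j, y})"
    using xj jy j not_frozen by (intro not_acyclic_if_3cycle[of x j _ y]) (auto simp: arrows_on_def)
  moreover have "card ({x, j, y} \<inter> frozen Q) \<le> 1"
    using j not_frozen card_le_Suc0_iff_eq[of "{x, j, y} \<inter> frozen Q"] by auto
  ultimately have "oriented_3cycle Q {x, j, y}"
    unfolding oriented_3cycle_def using xy j distinct by auto
  then have "\<not> acyclic (arrows_on (mutate j Q) {x, j, y})"
    using preserving unfolding cycle_preserving_def oriented_3cycle_def by blast
  moreover have "\<not> arrow (mutate j Q) x j" "\<not> arrow (mutate j Q) j y"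
    using xj jy bm_mutate_apex[OF j(2)] by simp_all
  ultimately show ?thesis
    using acyclic_arrows_on_triple[OF wf_quiver_mutate[OF wf]] by blast
qed

lemma complete_mutate:
  assumes wf: "wf_quiver Q" and complete: "complete Q" and preserving: "cycle_preserving Q j"
  shows "complete (mutate j Q)"
  unfolding complete_def mutate_simps
proof (intro ballI impI)
  fix x y assume xy: "x \<in> verts Q" "y \<in> verts Q" "x \<noteq> y" "x \<notin> frozen Q \<or> y \<notin> frozen Q"
  then have nz: "bm Q x y \<noteq> 0" using complete unfolding complete_def by blast
  have not_frozen: "\<not> (x \<in> frozen Q \<and> y \<in> frozen Q)" using xy(4) by blast
  have j: "j \<in> verts Q" "j \<notin> frozen Q"
    using preserving unfolding cycle_preserving_def mutable_def by auto
  show "bm (mutate j Q) x y \<noteq> 0"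
  proof (cases "x = j \<or> y = j")
    case True
    then have "bm (mutate j Q) x y = - bm Q x y"
      using bm_mutate_apex[OF j(2)] by blast
    then show ?thesis using nz by simp
  next
    case False
    have "arrow Q x j \<or> arrow Q j x" "arrow Q j y \<or> arrow Q y j"
      using arrow_or_converse[OF wf complete] xy j False by blast+
    then consider "arrow Q x j" "arrow Q j y" | "arrow Q y j" "arrow Q j x"
      | "bm Q x j * bm Q j y \<le> 0"
      using wf_quiver_skew[OF wf, of y j] wf_quiver_skew[OF wf, of j x]
      by (smt (verit) mult_pos_neg mult_neg_pos)
    then show ?thesis
    proof cases
      case 1
      then show ?thesis
        using arrow_mutate_of_path[OF wf complete preserving not_frozen] by simp
    next
      case 2
      then have "arrow (mutate j Q) y x"
        using arrow_mutate_of_path[OF wf complete preserving] not_frozen by blast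
      then show ?thesis
        using wf_quiver_skew[OF wf_quiver_mutate[OF wf, of j], of y x] by simp
    next
      case 3
      then have "bm (mutate j Q) x y = bm Q x y"
        using bm_mutate_off_paths[OF not_frozen] False by blast
      then show ?thesis using nz by simp
    qed
  qed
qed

lemma is_vortex_apex_if_3cycle_sink_or_source:
  assumes wf: "wf_quiver Q" and j: "j \<in> mutable Q" and avoid: "j \<notin> {x, y, z}"
    and cycle: "arrow Q x y" "arrow Q y z" "arrow Q z x"
    and sink_or_source:
      "(arrow Q x j \<and> arrow Q y j \<and> arrow Q z j) \<or> (arrow Q j x \<and> arrow Q j y \<and> arrow Q j z)"
  shows "is_vortex_apex Q j"
proof -
  let ?S = "{j, x, y, z}"
  have j': "j \<in> verts Q" "j \<notin> frozen Q" using j unfolding mutable_def by auto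
  have distinct: "x \<noteq> y" "y \<noteq> z" "z \<noteq> x"
    using cycle arrow_irrefl[OF wf] by metis+
  have "?S \<subseteq> verts Q"
    using j' cycle arrow_imp_verts[OF wf] by blast
  moreover have "card ?S = 4"
    using avoid distinct by auto
  moreover have "card (?S \<inter> frozen Q) \<le> 1"
    using j' cycle arrow_imp_not_both_frozen[OF wf] card_le_Suc0_iff_eq[of "?S \<inter> frozen Q"]
    by auto
  moreover have "\<not> acyclic (arrows_on Q (?S - {j}))"
    using cycle avoid arrow_imp_not_both_frozen[OF wf]
    by (intro not_acyclic_if_3cycle[of x y _ z]) (auto simp: arrows_on_def)
  moreover have "(\<forall>p\<in>?S. (p, j) \<notin> arrows_on Q ?S) \<or> (\<forall>p\<in>?S. (j, p) \<notin> arrows_on Q ?S)"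
    using sink_or_source arrow_irrefl[OF wf, of j] arrow_asym[OF wf]
    unfolding arrows_on_def by blast
  ultimately show ?thesis
    unfolding is_vortex_apex_def vortex_with_apex_def by blast
qed

locale paths_through_apex_close =
  fixes R :: "'v quiver" and j :: 'v
  assumes wf: "wf_quiver R" and complete: "complete R" and apex_mutable: "j \<in> mutable R"
    and path_closes:
      "\<And>x y. \<not> (x \<in> frozen R \<and> y \<in> frozen R) \<Longrightarrow> arrow R x j \<Longrightarrow> arrow R j y \<Longrightarrow> arrow R y x"
begin

lemma arrow_into_apex_propagates:
  assumes "arrow R x y" "arrow R x j" "y \<noteq> j"
  shows "arrow R y j"
proof -
  have "y \<in> verts R" "j \<in> verts R" "j \<notin> frozen R"
    using assms(1) arrow_imp_verts[OF wf] apex_mutable unfolding mutable_def by blast+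
  then have "arrow R y j \<or> arrow R j y"
    using arrow_or_converse[OF wf complete] assms(3) by blast
  then show ?thesis
    using path_closes[OF arrow_imp_not_both_frozen[OF wf assms(1)] assms(2)] assms(1)
      arrow_asym[OF wf] by blast
qed

lemma arrow_from_apex_propagates:
  assumes "arrow R x y" "arrow R j y" "x \<noteq> j"
  shows "arrow R j x"
proof -
  have "x \<in> verts R" "j \<in> verts R" "j \<notin> frozen R"
    using assms(1) arrow_imp_verts[OF wf] apex_mutable unfolding mutable_def by blast+
  then have "arrow R x j \<or> arrow R j x"
    using arrow_or_converse[OF wf complete] assms(3) by blast
  then show ?thesis
    using path_closes[OF arrow_imp_not_both_frozen[OF wf assms(1)] _ assms(2)] assms(1)
      arrow_asym[OF wf] by blast
qed

lemma apex_sink_or_source_of_3cycle: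
  assumes "j \<notin> {x, y, z}" "arrow R x y" "arrow R y z" "arrow R z x"
  shows "(arrow R x j \<and> arrow R y j \<and> arrow R z j) \<or> (arrow R j x \<and> arrow R j y \<and> arrow R j z)"
proof -
  have "x \<in> verts R" "j \<in> verts R" "j \<notin> frozen R"
    using assms(2) arrow_imp_verts[OF wf] apex_mutable unfolding mutable_def by blast+
  then consider "arrow R x j" | "arrow R j x"
    using arrow_or_converse[OF wf complete] assms(1) by blast
  then show ?thesis
  proof cases
    case 1
    then show ?thesis
      using assms arrow_into_apex_propagates by blast
  next
    case 2
    then show ?thesis
      using assms arrow_from_apex_propagates by blast
  qed
qed

lemma apex_separates:
  assumes i: "i \<in> mutable R" "i \<noteq> j"
    and "arrow R w i" "arrow R i w'" "arrow R w j" "arrow R j w'"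
  shows False
proof -
  have "i \<in> verts R" "j \<in> verts R" "i \<notin> frozen R"
    using i apex_mutable unfolding mutable_def by auto
  then have "arrow R i j \<or> arrow R j i"
    using arrow_or_converse[OF wf complete] i(2) by blast
  then show False
    using path_closes[of i w'] path_closes[of w i] assms \<open>i \<notin> frozen R\<close> arrow_asym[OF wf]
    by blast
qed

lemma path_from_mutable_closes:
  assumes "a \<in> mutable R"
  shows "arrow R a j \<Longrightarrow> arrow R j b \<Longrightarrow> arrow R b a" and "arrow R b j \<Longrightarrow> arrow R j a \<Longrightarrow> arrow R a b"
  using path_closes assms unfolding mutable_def by blast+

end

lemma paths_through_apex_close_mutate:
  assumes wf: "wf_quiver Q" and complete: "complete Q" and preserving: "cycle_preserving Q j"
  shows "paths_through_apex_close (mutate j Q) j"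
proof
  show "wf_quiver (mutate j Q)" using wf by (rule wf_quiver_mutate)
  show "complete (mutate j Q)" using wf complete preserving by (rule complete_mutate)
  show j: "j \<in> mutable (mutate j Q)"
    using preserving unfolding cycle_preserving_def by simp
  fix x y assume not_frozen: "\<not> (x \<in> frozen (mutate j Q) \<and> y \<in> frozen (mutate j Q))"
    and "arrow (mutate j Q) x j" "arrow (mutate j Q) j y"
  moreover have "j \<notin> frozen Q" using j unfolding mutable_def by simp
  ultimately have "arrow Q y j" "arrow Q j x"
    unfolding bm_mutate_apex[OF \<open>j \<notin> frozen Q\<close>]
    using wf_quiver_skew[OF wf, of x j] wf_quiver_skew[OF wf, of j y] by linarith+
  then show "arrow (mutate j Q) y x"
    using arrow_mutate_of_path[OF wf complete preserving] not_frozen by auto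
qed

lemma mutate_no_3cycle_avoiding_apex:
  assumes wf: "wf_quiver Q" and complete: "complete Q" and preserving: "cycle_preserving Q j"
    and no_vortex: "\<not> is_vortex_apex Q j"
    and avoid: "j \<notin> {x, y, z}" and cycle: "arrow (mutate j Q) x y" "arrow (mutate j Q) y z"
  shows "\<not> arrow (mutate j Q) z x"
proof
  assume zx: "arrow (mutate j Q) z x"
  interpret mutated: paths_through_apex_close "mutate j Q" j
    using wf complete preserving by (rule paths_through_apex_close_mutate)
  have j: "j \<in> mutable Q" "j \<notin> frozen Q"
    using preserving unfolding cycle_preserving_def mutable_def by auto
  have reversed: "arrow (mutate j Q) a j \<longleftrightarrow> arrow Q j a" "arrow (mutate j Q) j a \<longleftrightarrow> arrow Q a j"
    for a
    using bm_mutate_apex[OF j(2)] wf_quiver_skew[OF wf, of a j] by auto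
  have sink_or_source:
    "(arrow (mutate j Q) x j \<and> arrow (mutate j Q) y j \<and> arrow (mutate j Q) z j)
      \<or> (arrow (mutate j Q) j x \<and> arrow (mutate j Q) j y \<and> arrow (mutate j Q) j z)"
    using mutated.apex_sink_or_source_of_3cycle[OF avoid cycle zx] .
  have unchanged: "bm (mutate j Q) a b = bm Q a b"
    if "arrow (mutate j Q) a b" "a \<noteq> j" "b \<noteq> j"
      "(arrow (mutate j Q) a j \<and> arrow (mutate j Q) b j) \<or> (arrow (mutate j Q) j a \<and> arrow (mutate j Q) j b)"
    for a b
  proof (rule bm_mutate_off_paths)
    show "\<not> (a \<in> frozen Q \<and> b \<in> frozen Q)"
      using arrow_imp_not_both_frozen[OF mutated.wf that(1)] by simp
    show "bm Q a j * bm Q j b \<le> 0"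
      using that(4) bm_mutate_apex[OF j(2)] wf_quiver_skew[OF wf, of a j]
        wf_quiver_skew[OF wf, of b j]
      by (auto simp: mult_le_0_iff zero_le_mult_iff)
  qed (use that in blast)+
  have "arrow Q x y" "arrow Q y z" "arrow Q z x"
    using cycle zx avoid sink_or_source unchanged[of x y] unchanged[of y z] unchanged[of z x]
    by auto
  moreover have "(arrow Q x j \<and> arrow Q y j \<and> arrow Q z j) \<or> (arrow Q j x \<and> arrow Q j y \<and> arrow Q j z)"
    using sink_or_source unfolding reversed by blast
  ultimately have "is_vortex_apex Q j"
    by (rule is_vortex_apex_if_3cycle_sink_or_source[OF wf j(1) avoid])
  with no_vortex show False ..
qed

locale apex_on_every_3cycle = paths_through_apex_close +
  assumes two_frozen: "card (frozen R) = 2"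
    and no_3cycle_avoiding_apex:
      "\<And>x y z. j \<notin> {x, y, z} \<Longrightarrow> arrow R x y \<Longrightarrow> arrow R y z \<Longrightarrow> \<not> arrow R z x"
begin

definition apex_colouring :: "_ \<Rightarrow> colour" where
  "apex_colouring i = (if red_vertex R i then Red else if green_vertex R i then Green
     else if i = j then Orange else Blue)"

lemma apex_colouring_Red: "apex_colouring i = Red \<longleftrightarrow> red_vertex R i"
  unfolding apex_colouring_def by simp

lemma apex_colouring_Green: "apex_colouring i = Green \<longleftrightarrow> green_vertex R i"
proof -
  have "\<not> (red_vertex R i \<and> green_vertex R i)"
  proof
    assume "red_vertex R i \<and> green_vertex R i"
    moreover obtain u where "u \<in> frozen R"
      using two_frozen unfolding card_2_iff by blast
    ultimately show False
      using arrow_from_frozen_if_red[OF wf complete] arrow_to_frozen_if_green[OF wf complete]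
        arrow_asym[OF wf] by blast
  qed
  then show ?thesis unfolding apex_colouring_def by auto
qed

lemma mixed_if_Blue:
  assumes "i \<in> mutable R" "apex_colouring i = Blue"
  obtains w w' where "i \<noteq> j" "frozen R = {w, w'}" "arrow R w i" "arrow R i w'"
  using assms mixed_vertex_between_frozen[OF wf complete two_frozen]
  unfolding apex_colouring_def by (auto split: if_splits)

lemma mixed_if_Orange:
  assumes "apex_colouring i = Orange"
  obtains w w' where "i = j" "frozen R = {w, w'}" "arrow R w j" "arrow R j w'"
  using assms mixed_vertex_between_frozen[OF wf complete two_frozen apex_mutable]
  unfolding apex_colouring_def by (auto split: if_splits)

lemma no_arrow_red_to_blue:
  assumes i: "i \<in> mutable R" "apex_colouring i = Blue" and k: "apex_colouring k = Red"
  shows "\<not> arrow R k i"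
proof -
  obtain w w' where w: "i \<noteq> j" "frozen R = {w, w'}" "arrow R w i" "arrow R i w'"
    using mixed_if_Blue[OF i] .
  have "arrow R w k" "arrow R w' k"
    using k arrow_from_frozen_if_red[OF wf complete] w(2) unfolding apex_colouring_Red by auto
  show ?thesis
  proof (cases "k = j")
    case True
    then show ?thesis
      using path_from_mutable_closes(2)[OF i(1), of w] \<open>arrow R w k\<close> w(3) arrow_asym[OF wf]
      by blast
  next
    case False
    then show ?thesis
      using no_3cycle_avoiding_apex[of k i w'] \<open>arrow R w' k\<close> w apex_mutable
      unfolding mutable_def by auto
  qed
qed

lemma no_arrow_blue_to_green:
  assumes i: "i \<in> mutable R" "apex_colouring i = Blue" and k: "apex_colouring k = Green"
  shows "\<not> arrow R i k"
proof -
  obtain w w' where w: "i \<noteq> j" "frozen R = {w, w'}" "arrow R w i" "arrow R i w'"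
    using mixed_if_Blue[OF i] .
  have "arrow R k w" "arrow R k w'"
    using k arrow_to_frozen_if_green[OF wf complete] w(2) unfolding apex_colouring_Green by auto
  show ?thesis
  proof (cases "k = j")
    case True
    then show ?thesis
      using path_from_mutable_closes(1)[OF i(1), of w'] \<open>arrow R k w'\<close> w(4) arrow_asym[OF wf]
      by blast
  next
    case False
    then show ?thesis
      using no_3cycle_avoiding_apex[of i k w] \<open>arrow R k w\<close> w apex_mutable
      unfolding mutable_def by auto
  qed
qed

lemma no_arrow_green_to_orange:
  assumes i: "apex_colouring i = Orange" and k: "k \<in> mutable R" "apex_colouring k = Green"
  shows "\<not> arrow R k i"
proof -
  obtain w w' where w: "i = j" "frozen R = {w, w'}" "arrow R w j" "arrow R j w'"
    using mixed_if_Orange[OF i] .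
  have "arrow R k w'"
    using k arrow_to_frozen_if_green[OF wf complete] w(2) unfolding apex_colouring_Green by auto
  then show ?thesis
    using path_from_mutable_closes(1)[OF k(1), of w'] w arrow_asym[OF wf] by blast
qed

lemma no_arrow_orange_to_red:
  assumes i: "apex_colouring i = Orange" and k: "k \<in> mutable R" "apex_colouring k = Red"
  shows "\<not> arrow R i k"
proof -
  obtain w w' where w: "i = j" "frozen R = {w, w'}" "arrow R w j" "arrow R j w'"
    using mixed_if_Orange[OF i] .
  have "arrow R w k"
    using k arrow_from_frozen_if_red[OF wf complete] w(2) unfolding apex_colouring_Red by auto
  then show ?thesis
    using path_from_mutable_closes(2)[OF k(1), of w] w arrow_asym[OF wf] by blast
qed

lemma complementary_Blue_Orange:
  assumes i: "i \<in> mutable R" "apex_colouring i = Blue" and k: "apex_colouring k = Orange"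
  shows "complementary R i k"
proof -
  obtain w w' where w: "i \<noteq> j" "frozen R = {w, w'}" "arrow R w i" "arrow R i w'"
    using mixed_if_Blue[OF i] .
  obtain x x' where x: "k = j" "frozen R = {x, x'}" "arrow R x j" "arrow R j x'"
    using mixed_if_Orange[OF k] .
  have "\<not> (arrow R w j \<and> arrow R j w')"
    using apex_separates[OF i(1) w(1) w(3,4)] by blast
  moreover have "x \<noteq> x'" using x arrow_asym[OF wf] by blast
  ultimately have "arrow R w' j" "arrow R j w"
    using x w(2) by (metis doubleton_eq_iff)+
  then show ?thesis
    unfolding complementary_def w(2) x(1)
    using w(3,4) wf_quiver_skew[OF wf, of i w] wf_quiver_skew[OF wf, of j w']
    by (auto simp: sgn_if)
qed

theorem brog_apex_colouring: "brog R"
  unfolding brog_def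
proof (intro exI[of _ apex_colouring] conjI ballI impI)
  fix i k assume i: "i \<in> mutable R" and k: "k \<in> mutable R"
  show "apex_colouring i = Red \<longleftrightarrow> red_vertex R i" by (fact apex_colouring_Red)
  show "apex_colouring i = Green \<longleftrightarrow> green_vertex R i" by (fact apex_colouring_Green)
  show "0 \<le> bm R i k" if "apex_colouring i = Blue" "apex_colouring k = Red"
    using no_arrow_red_to_blue[OF i that] wf_quiver_skew[OF wf, of i k] by simp
  show "bm R i k \<le> 0" if "apex_colouring i = Blue" "apex_colouring k = Green"
    using no_arrow_blue_to_green[OF i that] by simp
  show "0 \<le> bm R i k" if "apex_colouring i = Orange" "apex_colouring k = Green"
    using no_arrow_green_to_orange[OF that(1) k that(2)] wf_quiver_skew[OF wf, of i k] by simp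
  show "bm R i k \<le> 0" if "apex_colouring i = Orange" "apex_colouring k = Red"
    using no_arrow_orange_to_red[OF that(1) k that(2)] by simp
  show "complementary R i k" if "apex_colouring i = Blue" "apex_colouring k = Orange"
    using complementary_Blue_Orange[OF i that] .
qed

end

theorem mainTheorem13:
  fixes Q :: "'v quiver" and j :: 'v
  assumes "wf_quiver Q"
    and "complete Q"
    and "card (frozen Q) = 2"
    and "j \<in> mutable Q"
    and "cycle_preserving Q j"
    and "\<not> is_vortex_apex Q j"
  shows "brog (mutate j Q)"
proof -
  \<comment> \<open>The hypothesis j \<in> mutable Q is part of cycle_preserving Q j.\<close>
  interpret mutated: paths_through_apex_close "mutate j Q" j
    using assms(1,2,5) by (rule paths_through_apex_close_mutate)
  interpret mutated: apex_on_every_3cycle "mutate j Q" j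
  proof
    show "card (frozen (mutate j Q)) = 2" using assms(3) by simp
    show "\<not> arrow (mutate j Q) z x"
      if "j \<notin> {x, y, z}" "arrow (mutate j Q) x y" "arrow (mutate j Q) y z" for x y z
      using mutate_no_3cycle_avoiding_apex[OF assms(1,2,5,6) that] .
  qed
  show ?thesis by (fact mutated.brog_apex_colouring)
qed

end
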